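(* Let $p\in(1,\infty]$ and let $\theta_p$ be a real number with $0<\theta_p\le 1/2$ and $3((1-\theta_p)^p+2\theta_p^p)^{1/p}+(3\theta_p^p)^{1/p}<3$ (for $p=\infty$ the latter is read as $3\max(1-\theta_\infty,\theta_\infty)+\theta_\infty<3$). Define, for $p<\infty$: $\alpha_X=3^{1/p}\theta_p$, $\alpha_P=1$, $\beta_{in}=((1-\theta_p)^p+2\theta_p^p)^{1/p}$, $\beta_{out}=(1+3\theta_p^p)^{1/p}$, $\gamma_0=6^{1/p}\theta_p$, $\gamma_1=4^{1/p}\theta_p$, $\gamma_2=2^{1/p}\theta_p$, $\tau=2^{1/p}$; and for $p=\infty$: $\alpha_X=\gamma_0=\gamma_1=\gamma_2=\theta_\infty$, $\alpha_P=\beta_{out}=\tau=1$, $\beta_{in}=1-\theta_\infty$. Then the tuple $(\alpha_X,\alpha_P,\beta_{in},\beta_{out},\gamma_0,\gamma_1,\gamma_2,\tau)$ is Steiner embeddable.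
   Context: These are the $\ell_p$-distances in the point configuration with terminals $\mathbf{0}$ and the standard basis vectors $\mathbf{e}_i$, and facilities $\theta_p(\mathbf{e}_i+\mathbf{e}_j+\mathbf{e}_k)$. A tuple $(\alpha_X,\alpha_P,\beta_{in},\beta_{out},\gamma_0,\gamma_1,\gamma_2,\tau)$ of positive reals is metric compatible if: $\alpha_X\le\min(\alpha_P+\beta_{in},\alpha_P+\beta_{out})$; $\alpha_P\le\min(\alpha_X+\beta_{in},\alpha_X+\beta_{out})$; $\beta_{in}\le\min(\alpha_X+\alpha_P,\beta_{out}+\tau,\gamma_i+\beta_{out}: i\in\{0,1,2\})$; $\beta_{out}\le\min(\alpha_X+\alpha_P,\beta_{in}+\tau,\gamma_i+\beta_{in}: i\in\{0,1,2\})$; $\gamma_i\le\min(2\alpha_X,\gamma_j+\gamma_k,2\beta_{in},2\beta_{out})$ for all $i,j,k\in\{0,1,2\}$; $\tau\le\min(2\alpha_P,2\beta_{in},2\beta_{out})$. It is Steiner embeddable if it is metric compatible and: (P1) $\alpha_X\le 3\gamma_2/2,\alpha_P,\beta_{in},\beta_{out},\gamma_0,\gamma_1,\tau$; (P2) $\alpha_P\le\beta_{out}$; (P3) $\beta_{in}+\alpha_X/3<\min(\alpha_P,\tau)$; (P4) $\min(\alpha_P,\tau)\le\beta_{in}+\gamma_2$. *)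

theory Defs
  imports "HOL-Analysis.Analysis" "HOL-Library.Extended_Real"
begin

definition metric_compatible ::
  "real \<Rightarrow> real \<Rightarrow> real \<Rightarrow> real \<Rightarrow> real \<Rightarrow> real \<Rightarrow> real \<Rightarrow> real \<Rightarrow> bool" where
  "metric_compatible aX aP bin bout g0 g1 g2 tau \<longleftrightarrow>
     (let g = (\<lambda>i::nat. if i = 0 then g0 else if i = 1 then g1 else g2) in
     aX > 0 \<and> aP > 0 \<and> bin > 0 \<and> bout > 0 \<and> g0 > 0 \<and> g1 > 0 \<and> g2 > 0 \<and> tau > 0 \<and>
     aX \<le> min (aP + bin) (aP + bout) \<and>
     aP \<le> min (aX + bin) (aX + bout) \<and>
     bin \<le> aX + aP \<and> bin \<le> bout + tau \<and> (\<forall>i\<in>{0,1,2}. bin \<le> g i + bout) \<and>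
     bout \<le> aX + aP \<and> bout \<le> bin + tau \<and> (\<forall>i\<in>{0,1,2}. bout \<le> g i + bin) \<and>
     (\<forall>i j k. {i, j, k} = {0,1,2::nat} \<longrightarrow>
        g i \<le> 2 * aX \<and> g i \<le> g j + g k \<and> g i \<le> 2 * bin \<and> g i \<le> 2 * bout) \<and>
     tau \<le> 2 * aP \<and> tau \<le> 2 * bin \<and> tau \<le> 2 * bout)"

definition steiner_embeddable ::
  "real \<Rightarrow> real \<Rightarrow> real \<Rightarrow> real \<Rightarrow> real \<Rightarrow> real \<Rightarrow> real \<Rightarrow> real \<Rightarrow> bool" where
  "steiner_embeddable aX aP bin bout g0 g1 g2 tau \<longleftrightarrow>
     metric_compatible aX aP bin bout g0 g1 g2 tau \<and>
     \<comment> \<open>P1\<close>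
     aX \<le> 3 * g2 / 2 \<and> aX \<le> aP \<and> aX \<le> bin \<and> aX \<le> bout \<and> aX \<le> g0 \<and> aX \<le> g1 \<and> aX \<le> tau \<and>
     \<comment> \<open>P2\<close>
     aP \<le> bout \<and>
     \<comment> \<open>P3\<close>
     bin + aX / 3 < min aP tau \<and>
     \<comment> \<open>P4\<close>
     min aP tau \<le> bin + g2"

end

theory Submission
  imports Defs
begin

(* For finite p every entry of the tuple is the l_p norm of an explicit vector: with t = theta,
   alpha_X = |(t,t,t)|, beta_in = |(1-t,t,t)|, beta_out = |(1,t,t,t)|, gamma_0, gamma_1, gamma_2 the
   norms of 6, 4, 2 copies of t, and tau = |(1,1)|. The triangle-type conditions are then
   Minkowski's inequality for suitable splittings of these vectors, the comparisons among the
   entries follow from coordinatewise monotonicity of the norm, and the strict inequality (P3) is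
   the hypothesis on theta, since tau = 2^(1/p) > 1. For p = infinity all conditions are linear
   inequalities in theta. *)


definition lp_norm :: "real \<Rightarrow> real list \<Rightarrow> real" where
  "lp_norm q xs = (\<Sum>x\<leftarrow>xs. \<bar>x\<bar> powr q) powr (1/q)"

lemma convex_on_powr_nonneg:
  fixes q :: real
  assumes q: "1 \<le> q"
  shows "convex_on {0..} (\<lambda>x. x powr q)"
proof (rule convex_onI)
  have scale: "(u * z) powr q \<le> u * z powr q" if "0 \<le> u" "u \<le> 1" "0 \<le> z" for u z :: real
  proof -
    have "u powr q \<le> u powr 1" using that q by (intro powr_mono') auto
    then show ?thesis using that by (simp add: powr_mult mult_right_mono)
  qed
  fix u x y :: real
  assume u: "0 < u" "u < 1" and xy: "x \<in> {0..}" "y \<in> {0..}"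
  consider "x = 0" | "y = 0" | "0 < x" "0 < y" using xy by force
  then show "((1 - u) *\<^sub>R x + u *\<^sub>R y) powr q \<le> (1 - u) * x powr q + u * y powr q"
  proof cases
    case 1
    then show ?thesis using scale[of u y] u xy by simp
  next
    case 2
    then show ?thesis using scale[of "1 - u" x] u xy by simp
  next
    case 3
    then show ?thesis using convex_onD[OF powr_convex[OF q], of u x y] u by simp
  qed
qed (rule convex_real_interval)

lemma minkowski_sum_powr:
  fixes x y :: "'i \<Rightarrow> real"
  assumes I: "finite I" and q: "1 \<le> q"
    and nonneg: "\<And>i. i \<in> I \<Longrightarrow> 0 \<le> x i" "\<And>i. i \<in> I \<Longrightarrow> 0 \<le> y i"
  shows "(\<Sum>i\<in>I. (x i + y i) powr q) powr (1/q)
    \<le> (\<Sum>i\<in>I. x i powr q) powr (1/q) + (\<Sum>i\<in>I. y i powr q) powr (1/q)"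
proof -
  define A where "A = (\<Sum>i\<in>I. x i powr q) powr (1/q)"
  define B where "B = (\<Sum>i\<in>I. y i powr q) powr (1/q)"
  have A_powr: "A powr q = (\<Sum>i\<in>I. x i powr q)" and B_powr: "B powr q = (\<Sum>i\<in>I. y i powr q)"
    using q by (simp_all add: A_def B_def powr_powr sum_nonneg)
  have vanish: "z i = 0" if "(\<Sum>i\<in>I. z i powr q) = 0" "i \<in> I" for z i
    using that I by (simp add: sum_nonneg_eq_0_iff)
  consider "A = 0" | "B = 0" | "0 < A" "0 < B" by (force simp: A_def B_def)
  then show ?thesis
  proof cases
    case 1
    then have "\<forall>i\<in>I. x i = 0" using A_powr vanish by simp
    then show ?thesis using 1 by (simp add: B_def[symmetric] A_def[symmetric])
  next
    case 2
    then have "\<forall>i\<in>I. y i = 0" using B_powr vanish by simp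
    then show ?thesis using 2 by (simp add: A_def[symmetric] B_def[symmetric])
  next
    case 3
    \<comment> \<open>convexity of \<open>x powr q\<close> for the weights \<open>A / (A + B)\<close> and \<open>B / (A + B)\<close>\<close>
    have "((x i + y i) / (A + B)) powr q
        \<le> A / (A + B) * (x i / A) powr q + B / (A + B) * (y i / B) powr q" if "i \<in> I" for i
    proof -
      have "1 - B / (A + B) = A / (A + B)"
        using 3 by (simp add: field_simps)
      moreover have "A / (A + B) * (x i / A) + B / (A + B) * (y i / B) = (x i + y i) / (A + B)"
        using 3 by (simp add: add_divide_distrib)
      ultimately show ?thesis
        using convex_onD[OF convex_on_powr_nonneg[OF q], of "B / (A + B)" "x i / A" "y i / B"]
          3 nonneg that by simp
    qed
    then have "(\<Sum>i\<in>I. ((x i + y i) / (A + B)) powr q)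
        \<le> A / (A + B) * (\<Sum>i\<in>I. (x i / A) powr q) + B / (A + B) * (\<Sum>i\<in>I. (y i / B) powr q)"
      by (force simp: sum_distrib_left sum.distrib[symmetric] intro: sum_mono)
    also have "\<dots> = 1"
      using 3 nonneg by (simp add: powr_divide sum_divide_distrib[symmetric] A_powr[symmetric]
          B_powr[symmetric] add_divide_distrib[symmetric])
    finally have "(\<Sum>i\<in>I. (x i + y i) powr q) \<le> (A + B) powr q"
      using 3 nonneg by (simp add: powr_divide sum_divide_distrib[symmetric])
    then have "(\<Sum>i\<in>I. (x i + y i) powr q) powr (1/q) \<le> ((A + B) powr q) powr (1/q)"
      using q by (intro powr_mono2) (auto intro: sum_nonneg)
    also have "\<dots> = A + B" using 3 q by (simp add: powr_powr)
    finally show ?thesis by (simp add: A_def B_def)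
  qed
qed

lemma lp_norm_triangle_ineq:
  assumes q: "1 \<le> q" and len: "length xs = length ys"
  shows "lp_norm q (map2 (+) xs ys) \<le> lp_norm q xs + lp_norm q ys"
proof -
  let ?I = "{..<length xs}"
  have "lp_norm q (map2 (+) xs ys) = (\<Sum>i\<in>?I. \<bar>xs ! i + ys ! i\<bar> powr q) powr (1/q)"
    using len by (simp add: lp_norm_def sum_list_sum_nth atLeast0LessThan)
  also have "\<dots> \<le> (\<Sum>i\<in>?I. (\<bar>xs ! i\<bar> + \<bar>ys ! i\<bar>) powr q) powr (1/q)"
    using q by (intro powr_mono2 sum_mono sum_nonneg) (auto simp: abs_triangle_ineq)
  also have "\<dots> \<le> lp_norm q xs + lp_norm q ys"
    using minkowski_sum_powr[OF _ q, of ?I "\<lambda>i. \<bar>xs ! i\<bar>" "\<lambda>i. \<bar>ys ! i\<bar>"] len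
    by (simp add: lp_norm_def sum_list_sum_nth atLeast0LessThan)
  finally show ?thesis .
qed

lemma lp_norm_mono:
  assumes q: "0 < q" and le: "list_all2 (\<lambda>x y. \<bar>x\<bar> \<le> \<bar>y\<bar>) xs ys"
  shows "lp_norm q xs \<le> lp_norm q ys"
proof -
  have "(\<Sum>x\<leftarrow>xs. \<bar>x\<bar> powr q) \<le> (\<Sum>y\<leftarrow>ys. \<bar>y\<bar> powr q)"
    using le by (induction rule: list_all2_induct) (use q in \<open>auto intro!: add_mono powr_mono2\<close>)
  then show ?thesis
    unfolding lp_norm_def using q by (intro powr_mono2 sum_list_nonneg) auto
qed

lemma lp_norm_replicate:
  assumes "q \<noteq> 0"
  shows "lp_norm q (replicate n x) = real n powr (1/q) * \<bar>x\<bar>"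
  using assms by (simp add: lp_norm_def sum_list_replicate powr_mult powr_powr)

lemma lp_norm_Cons:
  assumes "0 < q"
  shows "lp_norm q (x # xs) = lp_norm q [x, lp_norm q xs]"
proof -
  have "0 \<le> (\<Sum>y\<leftarrow>xs. \<bar>y\<bar> powr q)" by (rule sum_list_nonneg) auto
  then show ?thesis using assms by (simp add: lp_norm_def powr_powr)
qed

lemma metric_compatibleI:
  fixes aX aP bin bout g0 g1 g2 tau :: real
  assumes pos: "0 < aX" "0 < aP" "0 < bin" "0 < bout" "0 < g2" "0 < tau"
    and gammas: "g2 \<le> g1" "g1 \<le> g0"
    and "aX \<le> aP + bin" "aX \<le> aP + bout" "aP \<le> aX + bin" "aP \<le> aX + bout"
    and "bin \<le> aX + aP" "bin \<le> bout + tau" and bin_g2: "bin \<le> g2 + bout"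
    and "bout \<le> aX + aP" "bout \<le> bin + tau" and bout_g2: "bout \<le> g2 + bin"
    and g0_le: "g0 \<le> 2 * aX" "g0 \<le> g1 + g2" "g0 \<le> 2 * bin" "g0 \<le> 2 * bout"
    and "tau \<le> 2 * aP" "tau \<le> 2 * bin" "tau \<le> 2 * bout"
  shows "metric_compatible aX aP bin bout g0 g1 g2 tau"
proof -
  define g where "g = (\<lambda>i::nat. if i = 0 then g0 else if i = 1 then g1 else g2)"
  have g_le: "g2 \<le> g i" "g i \<le> g0" for i
    using gammas by (auto simp: g_def)
  have g_triangle: "g i \<le> g j + g k" if "{i, j, k} = {0, 1, 2}" for i j k
  proof -
    have "0 \<in> {i, j, k}" "1 \<in> {i, j, k}" "2 \<in> {i, j, k}"
      unfolding that by simp_all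
    then consider "i = 0" "j = 1" "k = 2" | "i = 0" "j = 2" "k = 1" | "j = 0" | "k = 0"
      by fastforce
    then show ?thesis
      using g_le[of i] g_le[of j] g_le[of k] g0_le pos by cases (auto simp: g_def)
  qed
  have "0 < g0" "0 < g1" using pos gammas by linarith+
  moreover have "bin \<le> g i + bout" "bout \<le> g i + bin" for i
    using g_le[of i] bin_g2 bout_g2 by linarith+
  moreover have "g i \<le> 2 * aX" "g i \<le> 2 * bin" "g i \<le> 2 * bout" for i
    using g_le[of i] g0_le by linarith+
  ultimately show ?thesis
    unfolding metric_compatible_def g_def[symmetric] Let_def
    using assms g_triangle by auto
qed

lemma lp_configuration_triangle_ineqs:
  fixes q t :: real
  assumes q: "1 \<le> q" and t: "0 \<le> t" "t \<le> 1"
  shows "lp_norm q [1, t, t, t] \<le> 1 + lp_norm q [t, t, t]"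
    and "lp_norm q [1, t, t, t] \<le> lp_norm q [t, t] + lp_norm q [1 - t, t, t]"
    and "lp_norm q [t, t, t, t, t, t] \<le> lp_norm q [t, t, t, t] + lp_norm q [t, t]"
    and "lp_norm q [t, t, t, t, t, t] \<le> 2 * lp_norm q [t, t, t]"
    and "lp_norm q [1, 1] \<le> 2 * lp_norm q [1 - t, t, t]"
proof -
  have triangle: "lp_norm q (map2 (+) xs ys) \<le> lp_norm q xs + lp_norm q ys"
    if "length xs = length ys" for xs ys
    using lp_norm_triangle_ineq[OF q that] .
  have [simp]: "\<bar>t\<bar> = t" "\<bar>1 - t\<bar> = 1 - t" using t by auto
  have "q \<noteq> 0" using q by auto
  then show "lp_norm q [1, t, t, t] \<le> 1 + lp_norm q [t, t, t]"
    using triangle[of "[1, 0, 0, 0]" "[0, t, t, t]"] by (simp add: lp_norm_def)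
  show "lp_norm q [1, t, t, t] \<le> lp_norm q [t, t] + lp_norm q [1 - t, t, t]"
    using triangle[of "[t, 0, 0, t]" "[1 - t, t, t, 0]"] by (simp add: lp_norm_def add_ac)
  show "lp_norm q [t, t, t, t, t, t] \<le> lp_norm q [t, t, t, t] + lp_norm q [t, t]"
    using triangle[of "[t, t, t, t, 0, 0]" "[0, 0, 0, 0, t, t]"] by (simp add: lp_norm_def add_ac)
  show "lp_norm q [t, t, t, t, t, t] \<le> 2 * lp_norm q [t, t, t]"
    using triangle[of "[t, t, t, 0, 0, 0]" "[0, 0, 0, t, t, t]"] by (simp add: lp_norm_def add_ac)
  have "lp_norm q [1, 1] \<le> lp_norm q [1, 1, 2 * t]"
    using lp_norm_mono[of q "[1, 1, 0]" "[1, 1, 2 * t]"] q by (simp add: lp_norm_def)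
  also have "\<dots> \<le> lp_norm q [1 - t, t, t] + lp_norm q [t, 1 - t, t]"
    using triangle[of "[1 - t, t, t]" "[t, 1 - t, t]"] by simp
  also have "\<dots> = 2 * lp_norm q [1 - t, t, t]" by (simp add: lp_norm_def add_ac)
  finally show "lp_norm q [1, 1] \<le> 2 * lp_norm q [1 - t, t, t]" .
qed

lemma lp_configuration_mono_ineqs:
  fixes q t :: real
  assumes q: "0 < q" and t: "0 \<le> t" "t \<le> 1/2"
  shows "t \<le> lp_norm q [t, t]" and "lp_norm q [t, t] \<le> lp_norm q [t, t, t]"
    and "lp_norm q [t, t, t] \<le> lp_norm q [t, t, t, t]"
    and "lp_norm q [t, t, t, t] \<le> lp_norm q [t, t, t, t, t, t]"
    and "lp_norm q [t, t, t] \<le> lp_norm q [1 - t, t, t]" and "1 - t \<le> lp_norm q [1 - t, t, t]"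
    and "lp_norm q [1 - t, t, t] \<le> lp_norm q [1, t, t, t]" and "1 \<le> lp_norm q [1, t, t, t]"
proof -
  have mono: "lp_norm q xs \<le> lp_norm q ys" if "list_all2 (\<lambda>x y. \<bar>x\<bar> \<le> \<bar>y\<bar>) xs ys" for xs ys
    using lp_norm_mono[OF q that] .
  have [simp]: "\<bar>t\<bar> = t" "\<bar>1 - t\<bar> = 1 - t" and "q \<noteq> 0" using t q by auto
  then have lp_simps [simp]: "lp_norm q [x] = \<bar>x\<bar>" "lp_norm q (0 # xs) = lp_norm q xs"
    "lp_norm q (xs @ [0]) = lp_norm q xs" for x xs
    by (simp_all add: lp_norm_def powr_powr)
  show "t \<le> lp_norm q [t, t]" using mono[of "[0, t]" "[t, t]"] t by simp
  show "lp_norm q [t, t] \<le> lp_norm q [t, t, t]" using mono[of "[0, t, t]" "[t, t, t]"] by simp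
  show "lp_norm q [t, t, t] \<le> lp_norm q [t, t, t, t]" using mono[of "[0, t, t, t]" "[t, t, t, t]"] by simp
  show "lp_norm q [t, t, t, t] \<le> lp_norm q [t, t, t, t, t, t]"
    using mono[of "[0, 0, t, t, t, t]" "[t, t, t, t, t, t]"] by simp
  show "lp_norm q [t, t, t] \<le> lp_norm q [1 - t, t, t]" using mono[of "[t, t, t]" "[1 - t, t, t]"] t by simp
  show "1 - t \<le> lp_norm q [1 - t, t, t]"
    using mono[of "[1 - t, 0, 0]" "[1 - t, t, t]"] lp_simps(3)[of "[1 - t, 0]"] lp_simps(3)[of "[1 - t]"] t
    by simp
  show "lp_norm q [1 - t, t, t] \<le> lp_norm q [1, t, t, t]"
    using mono[of "[1 - t, t, t, 0]" "[1, t, t, t]"] lp_simps(3)[of "[1 - t, t, t]"] t by simp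
  show "1 \<le> lp_norm q [1, t, t, t]"
    using mono[of "[1, 0, 0, 0]" "[1, t, t, t]"] t by (simp add: lp_norm_def)
qed

lemma steiner_embeddable_lp_configuration:
  fixes q t :: real
  defines "aX \<equiv> lp_norm q [t, t, t]" and "bin \<equiv> lp_norm q [1 - t, t, t]"
    and "bout \<equiv> lp_norm q [1, t, t, t]" and "g0 \<equiv> lp_norm q [t, t, t, t, t, t]"
    and "g1 \<equiv> lp_norm q [t, t, t, t]" and "g2 \<equiv> lp_norm q [t, t]" and "tau \<equiv> lp_norm q [1, 1]"
  assumes q: "1 < q" and t: "0 < t" "t \<le> 1/2" and small: "3 * bin + aX < 3"
  shows "steiner_embeddable aX 1 bin bout g0 g1 g2 tau"
proof -
  have q0: "0 < q" and q1: "1 \<le> q" and q_ne: "q \<noteq> 0" and r: "0 < 1/q" "1/q < 1"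
    and t_01: "0 \<le> t" "t \<le> 1"
    using q t by auto
  note mono_ineqs = lp_configuration_mono_ineqs[OF q0 t_01(1) t(2), folded assms(1-7)]
  note triangle_ineqs = lp_configuration_triangle_ineqs[OF q1 t_01, folded assms(1-7)]
  have tau_bounds: "1 < tau" "tau \<le> 2"
    using lp_norm_replicate[OF q_ne, of 2 1] r powr_mono[of "1/q" 1 2]
    by (simp_all add: tau_def numeral_eq_Suc)
  have bout_le_tau: "bout \<le> tau"
  proof -
    have "0 \<le> aX" "aX \<le> 1" using mono_ineqs small t by linarith+
    then have "lp_norm q [1, aX] \<le> lp_norm q [1, 1]"
      using lp_norm_mono[OF q0, of "[1, aX]" "[1, 1]"] by simp
    then show ?thesis
      using lp_norm_Cons[OF q0, of 1 "[t, t, t]"] by (simp add: bout_def aX_def tau_def)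
  qed
  have aX_le_g2: "aX \<le> 3 * g2 / 2"
  proof -
    have "(3/2) powr (1/q) \<le> (3/2::real) powr 1" using r by (intro powr_mono) auto
    then have "(3/2) powr (1/q) * (2 powr (1/q) * t) \<le> 3/2 * (2 powr (1/q) * t)"
      using t by (intro mult_right_mono) auto
    moreover have "aX = 3 powr (1/q) * t" "g2 = 2 powr (1/q) * t"
      using lp_norm_replicate[OF q_ne, of 3 t] lp_norm_replicate[OF q_ne, of 2 t] t
      by (simp_all add: aX_def g2_def numeral_eq_Suc)
    ultimately show ?thesis by (simp add: powr_mult[symmetric] mult.assoc[symmetric])
  qed
  have "min 1 tau = 1" using tau_bounds by simp
  then show ?thesis
    unfolding steiner_embeddable_def
    by (intro conjI metric_compatibleI)
      (use t mono_ineqs triangle_ineqs tau_bounds bout_le_tau aX_le_g2 small in linarith)+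
qed

lemma steiner_embeddable_sup_norm_configuration:
  fixes t :: real
  assumes "0 < t" "t \<le> 1/2"
  shows "steiner_embeddable t 1 (1 - t) 1 t t t 1"
  unfolding steiner_embeddable_def using assms by (intro conjI metric_compatibleI) auto

theorem proposition5p2:
  fixes p :: ereal and \<theta> :: real
    and aX aP bin bout g0 g1 g2 tau :: real
  assumes hp: "1 < p"
    and h\<theta>: "0 < \<theta>" "\<theta> \<le> 1/2"
    and hfin: "p \<noteq> \<infinity> \<Longrightarrow>
      3 * ((1 - \<theta>) powr real_of_ereal p + 2 * \<theta> powr real_of_ereal p) powr (1 / real_of_ereal p)
        + (3 * \<theta> powr real_of_ereal p) powr (1 / real_of_ereal p) < 3"
    and hinf: "p = \<infinity> \<Longrightarrow> 3 * max (1 - \<theta>) \<theta> + \<theta> < 3"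
    and defs_fin: "p \<noteq> \<infinity> \<Longrightarrow>
      aX = 3 powr (1 / real_of_ereal p) * \<theta> \<and> aP = 1 \<and>
      bin = ((1 - \<theta>) powr real_of_ereal p + 2 * \<theta> powr real_of_ereal p) powr (1 / real_of_ereal p) \<and>
      bout = (1 + 3 * \<theta> powr real_of_ereal p) powr (1 / real_of_ereal p) \<and>
      g0 = 6 powr (1 / real_of_ereal p) * \<theta> \<and> g1 = 4 powr (1 / real_of_ereal p) * \<theta> \<and>
      g2 = 2 powr (1 / real_of_ereal p) * \<theta> \<and> tau = 2 powr (1 / real_of_ereal p)"
    and defs_inf: "p = \<infinity> \<Longrightarrow>
      aX = \<theta> \<and> g0 = \<theta> \<and> g1 = \<theta> \<and> g2 = \<theta> \<and> aP = 1 \<and> bout = 1 \<and> tau = 1 \<and> bin = 1 - \<theta>"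
  shows "steiner_embeddable aX aP bin bout g0 g1 g2 tau"
proof (cases "p = \<infinity>")
  case True
  \<comment> \<open>\<open>hinf\<close> is automatic here: for \<open>\<theta> \<le> 1/2\<close> it reads \<open>3 - 2 * \<theta> < 3\<close>\<close>
  then show ?thesis
    using defs_inf steiner_embeddable_sup_norm_configuration[OF h\<theta>] by simp
next
  case False
  then obtain q where p: "p = ereal q" and q: "1 < q" using hp by (cases p) auto
  have [simp]: "\<bar>\<theta>\<bar> = \<theta>" "\<bar>1 - \<theta>\<bar> = 1 - \<theta>" using h\<theta> by auto
  have replicate: "lp_norm q (replicate n \<theta>) = n powr (1/q) * \<theta>" for n
    using lp_norm_replicate[of q n \<theta>] q by simp
  have "aX = lp_norm q [\<theta>, \<theta>, \<theta>]" "g0 = lp_norm q [\<theta>, \<theta>, \<theta>, \<theta>, \<theta>, \<theta>]"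
    "g1 = lp_norm q [\<theta>, \<theta>, \<theta>, \<theta>]" "g2 = lp_norm q [\<theta>, \<theta>]"
    using defs_fin[OF False] replicate[of 3] replicate[of 6] replicate[of 4] replicate[of 2]
    by (simp_all add: p numeral_eq_Suc)
  moreover have "bin = lp_norm q [1 - \<theta>, \<theta>, \<theta>]" "bout = lp_norm q [1, \<theta>, \<theta>, \<theta>]"
    "tau = lp_norm q [1, 1]" "aP = 1"
    using defs_fin[OF False] by (simp_all add: p lp_norm_def)
  moreover have "3 * lp_norm q [1 - \<theta>, \<theta>, \<theta>] + lp_norm q [\<theta>, \<theta>, \<theta>] < 3"
    using hfin[OF False] by (simp add: p lp_norm_def)
  ultimately show ?thesis
    using steiner_embeddable_lp_configuration[OF q h\<theta>] by simp
qed

end
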